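(* Let $\Bbbk$ be a field with $\operatorname{char}\Bbbk\neq 2$. Let $I$ be the ideal of the Jordan dialgebra $\mathrm{DiSJ}\langle x,y\rangle$ generated by the element $k=\tfrac12(\dot x x+x\dot x)-\tfrac12(\dot y y+y\dot y)$. Then the quotient dialgebra $\mathrm{DiSJ}\langle x,y\rangle/I$ is exceptional, i.e. it is not isomorphic to a subdialgebra of $D^{(+)}$ for any associative dialgebra $D$.
   Context: A dialgebra is a vector space with two bilinear operations $\vdash,\dashv$. It is associative if $(x\dashv y)\vdash z=(x\vdash y)\vdash z$, $x\dashv(y\vdash z)=x\dashv(y\dashv z)$, $(x\vdash y)\vdash z=x\vdash(y\vdash z)$, $(x\dashv y)\dashv z=x\dashv(y\dashv z)$, $(x\vdash y)\dashv z=x\vdash(y\dashv z)$. The free associative dialgebra $\mathrm{DiAs}\langle X\rangle$ has basis the words $x_1\cdots\dot x_k\cdots x_n$ meaning $x_1\vdash\cdots\vdash x_{k-1}\vdash x_k\dashv x_{k+1}\dashv\cdots\dashv x_n$ (so $\dot x x=x\dashv x$, $x\dot x=x\vdash x$). For an associative dialgebra $D$, $D^{(+)}$ is $D$ with $a\vdash_+b=\tfrac12(a\vdash b+b\dashv a)$, $a\dashv_+b=\tfrac12(a\dashv b+b\vdash a)$. $\mathrm{DiSJ}\langle x,y\rangle$ is the subdialgebra of $\mathrm{DiAs}\langle x,y\rangle^{(+)}$ generated by $x,y$; ideals are taken with respect to $\vdash_+,\dashv_+$. *)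

theory Defs
  imports Complex_Main
begin

definition bilinear_op :: "('k::field \<Rightarrow> 'd::ab_group_add \<Rightarrow> 'd) \<Rightarrow> ('d \<Rightarrow> 'd \<Rightarrow> 'd) \<Rightarrow> bool" where
  "bilinear_op smul m \<longleftrightarrow>
     (\<forall>a b c. m (a + b) c = m a c + m b c) \<and>
     (\<forall>a b c. m a (b + c) = m a b + m a c) \<and>
     (\<forall>s a b. m (smul s a) b = smul s (m a b)) \<and>
     (\<forall>s a b. m a (smul s b) = smul s (m a b))"

text \<open>dl a b means a |- b, dr a b means a -| b.\<close>
definition assoc_dialgebra ::
  "('k::field \<Rightarrow> 'd::ab_group_add \<Rightarrow> 'd) \<Rightarrow> ('d \<Rightarrow> 'd \<Rightarrow> 'd) \<Rightarrow> ('d \<Rightarrow> 'd \<Rightarrow> 'd) \<Rightarrow> bool" where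
  "assoc_dialgebra smul dl dr \<longleftrightarrow>
     Vector_Spaces.vector_space smul \<and> bilinear_op smul dl \<and> bilinear_op smul dr \<and>
     (\<forall>x y z. dl (dr x y) z = dl (dl x y) z) \<and>
     (\<forall>x y z. dr x (dl y z) = dr x (dr y z)) \<and>
     (\<forall>x y z. dl (dl x y) z = dl x (dl y z)) \<and>
     (\<forall>x y z. dr (dr x y) z = dr x (dr y z)) \<and>
     (\<forall>x y z. dr (dl x y) z = dl x (dr y z))"

definition plus_l :: "('k::field \<Rightarrow> 'd::ab_group_add \<Rightarrow> 'd) \<Rightarrow> ('d \<Rightarrow> 'd \<Rightarrow> 'd) \<Rightarrow> ('d \<Rightarrow> 'd \<Rightarrow> 'd) \<Rightarrow> 'd \<Rightarrow> 'd \<Rightarrow> 'd" where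
  "plus_l smul dl dr a b = smul (inverse 2) (dl a b + dr b a)"

definition plus_r :: "('k::field \<Rightarrow> 'd::ab_group_add \<Rightarrow> 'd) \<Rightarrow> ('d \<Rightarrow> 'd \<Rightarrow> 'd) \<Rightarrow> ('d \<Rightarrow> 'd \<Rightarrow> 'd) \<Rightarrow> 'd \<Rightarrow> 'd \<Rightarrow> 'd" where
  "plus_r smul dl dr a b = smul (inverse 2) (dr a b + dl b a)"

text \<open>Basis: pairs (w, i) with w a nonempty word over the alphabet {x,y} (x = False,
 y = True) and i < length w the position of the dot, i.e. the word
 w_0 |- ... |- w_(i-1) |- w_i -| w_(i+1) -| ... -| w_(n-1).
 Elements are coefficient functions on these pairs; every element we ever form
 (the ones generated from x and y) is finitely supported on valid basis pairs.\<close>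

type_synonym 'k dias = "bool list \<times> nat \<Rightarrow> 'k"

definition dzero :: "'k::field dias" where "dzero = (\<lambda>_. 0)"
definition dadd :: "'k::field dias \<Rightarrow> 'k dias \<Rightarrow> 'k dias" where
  "dadd f g = (\<lambda>b. f b + g b)"
definition dsub :: "'k::field dias \<Rightarrow> 'k dias \<Rightarrow> 'k dias" where
  "dsub f g = (\<lambda>b. f b - g b)"
definition dscale :: "'k::field \<Rightarrow> 'k dias \<Rightarrow> 'k dias" where
  "dscale c f = (\<lambda>b. c * f b)"

definition dgen :: "bool \<Rightarrow> 'k::field dias" where
  "dgen a = (\<lambda>(w, i). if w = [a] \<and> i = 0 then 1 else 0)"

text \<open>Bilinear extension of (u,i) |- (v,j) = (u v, |u| + j) (dot in the right factor).\<close>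
definition dvdash :: "'k::field dias \<Rightarrow> 'k dias \<Rightarrow> 'k dias" where
  "dvdash f g = (\<lambda>(w, k). \<Sum>m\<in>{1..<length w}.
      if m \<le> k then (\<Sum>i<m. f (take m w, i)) * g (drop m w, k - m) else 0)"

text \<open>Bilinear extension of (u,i) -| (v,j) = (u v, i) (dot in the left factor).\<close>
definition ddashv :: "'k::field dias \<Rightarrow> 'k dias \<Rightarrow> 'k dias" where
  "ddashv f g = (\<lambda>(w, k). \<Sum>m\<in>{1..<length w}.
      if k < m then f (take m w, k) * (\<Sum>j<length w - m. g (drop m w, j)) else 0)"

definition jl :: "'k::field dias \<Rightarrow> 'k dias \<Rightarrow> 'k dias" where
  "jl a b = dscale (inverse 2) (dadd (dvdash a b) (ddashv b a))"
definition jr :: "'k::field dias \<Rightarrow> 'k dias \<Rightarrow> 'k dias" where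
  "jr a b = dscale (inverse 2) (dadd (ddashv a b) (dvdash b a))"

inductive_set DiSJ :: "'k::field dias set" where
  gen_x: "dgen False \<in> DiSJ"
| gen_y: "dgen True \<in> DiSJ"
| zero: "dzero \<in> DiSJ"
| add: "a \<in> DiSJ \<Longrightarrow> b \<in> DiSJ \<Longrightarrow> dadd a b \<in> DiSJ"
| scale: "a \<in> DiSJ \<Longrightarrow> dscale c a \<in> DiSJ"
| opl: "a \<in> DiSJ \<Longrightarrow> b \<in> DiSJ \<Longrightarrow> jl a b \<in> DiSJ"
| opr: "a \<in> DiSJ \<Longrightarrow> b \<in> DiSJ \<Longrightarrow> jr a b \<in> DiSJ"

text \<open>The element k = 1/2 (x. x + x x.) - 1/2 (y. y + y y.), where x. x = x -| x and
 x x. = x |- x in DiAs<x,y>.\<close>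
definition kelem :: "'k::field dias" where
  "kelem = dsub
     (dscale (inverse 2) (dadd (ddashv (dgen False) (dgen False)) (dvdash (dgen False) (dgen False))))
     (dscale (inverse 2) (dadd (ddashv (dgen True) (dgen True)) (dvdash (dgen True) (dgen True))))"

inductive_set Iideal :: "'k::field dias set" where
  gen: "kelem \<in> Iideal"
| zero: "dzero \<in> Iideal"
| add: "a \<in> Iideal \<Longrightarrow> b \<in> Iideal \<Longrightarrow> dadd a b \<in> Iideal"
| scale: "a \<in> Iideal \<Longrightarrow> dscale c a \<in> Iideal"
| ml: "a \<in> DiSJ \<Longrightarrow> i \<in> Iideal \<Longrightarrow> jl a i \<in> Iideal"
| mr: "a \<in> DiSJ \<Longrightarrow> i \<in> Iideal \<Longrightarrow> jl i a \<in> Iideal"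
| nl: "a \<in> DiSJ \<Longrightarrow> i \<in> Iideal \<Longrightarrow> jr a i \<in> Iideal"
| nr: "a \<in> DiSJ \<Longrightarrow> i \<in> Iideal \<Longrightarrow> jr i a \<in> Iideal"

definition coset :: "'k::field dias \<Rightarrow> 'k dias set" where
  "coset a = {b. dsub b a \<in> Iideal}"

definition Quot :: "'k::field dias set set" where
  "Quot = coset ` DiSJ"

definition rep :: "'k::field dias set \<Rightarrow> 'k dias" where
  "rep A = (SOME a. a \<in> A)"

definition qadd :: "'k::field dias set \<Rightarrow> 'k dias set \<Rightarrow> 'k dias set" where
  "qadd A B = coset (dadd (rep A) (rep B))"
definition qscale :: "'k::field \<Rightarrow> 'k dias set \<Rightarrow> 'k dias set" where
  "qscale c A = coset (dscale c (rep A))"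
definition ql :: "'k::field dias set \<Rightarrow> 'k dias set \<Rightarrow> 'k dias set" where
  "ql A B = coset (jl (rep A) (rep B))"
definition qr :: "'k::field dias set \<Rightarrow> 'k dias set \<Rightarrow> 'k dias set" where
  "qr A B = coset (jr (rep A) (rep B))"

text \<open>An injective dialgebra homomorphism from DiSJ<x,y>/I into D^(+), i.e. an isomorphism
 of DiSJ<x,y>/I onto a subdialgebra of D^(+).\<close>
definition embeds_into_plus ::
  "('k::field \<Rightarrow> 'd::ab_group_add \<Rightarrow> 'd) \<Rightarrow> ('d \<Rightarrow> 'd \<Rightarrow> 'd) \<Rightarrow> ('d \<Rightarrow> 'd \<Rightarrow> 'd) \<Rightarrow> bool" where
  "embeds_into_plus smul dl dr \<longleftrightarrow>
    (\<exists>\<phi> :: 'k dias set \<Rightarrow> 'd.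
       inj_on \<phi> Quot \<and>
       (\<forall>A\<in>Quot. \<forall>B\<in>Quot. \<phi> (qadd A B) = \<phi> A + \<phi> B) \<and>
       (\<forall>c. \<forall>A\<in>Quot. \<phi> (qscale c A) = smul c (\<phi> A)) \<and>
       (\<forall>A\<in>Quot. \<forall>B\<in>Quot. \<phi> (ql A B) = plus_l smul dl dr (\<phi> A) (\<phi> B)) \<and>
       (\<forall>A\<in>Quot. \<forall>B\<in>Quot. \<phi> (qr A B) = plus_r smul dl dr (\<phi> A) (\<phi> B)))"

end

theory Submission
  imports Defs
begin

text \<open>Suppose DiSJ<x,y>/I embeds into D^(+), with x and y sent to a and b. The relation
  k = 0 says that a -| a + a |- a = b -| b + b |- b in D. A combination of multiples of this
  relation under the associative operations of D shows that the Jordan words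
  wA = x o ((x o (x o y)) o y) and wB = (x o (x o y)) o (x o y), with o the operation |-+ of
  D^(+), take the same value at (a, b); so wB - wA lies in I by injectivity.
  On the other hand an explicit linear functional on the degree 5 part of DiAs<x,y> vanishes
  on I but not on wB - wA. Since every element of DiSJ<x,y> is a linear combination of Jordan
  words and k is homogeneous of degree 2, vanishing on I reduces to finitely many values:
  the functional applied to k multiplied successively by Jordan words of total degree 3.\<close>

lemma dvdash_dadd_left: "dvdash (dadd f g) h = dadd (dvdash f h) (dvdash g h)"
  by (auto simp: fun_eq_iff dvdash_def dadd_def sum.distrib[symmetric] intro!: sum.cong)
    (simp_all add: sum.distrib algebra_simps)

lemma dvdash_dadd_right: "dvdash h (dadd f g) = dadd (dvdash h f) (dvdash h g)"
  by (auto simp: fun_eq_iff dvdash_def dadd_def sum.distrib[symmetric] algebra_simps intro!: sum.cong)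

lemma dvdash_dscale_left: "dvdash (dscale c f) h = dscale c (dvdash f h)"
  by (auto simp: fun_eq_iff dvdash_def dscale_def sum_distrib_left algebra_simps intro!: sum.cong)

lemma dvdash_dscale_right: "dvdash h (dscale c f) = dscale c (dvdash h f)"
  by (auto simp: fun_eq_iff dvdash_def dscale_def sum_distrib_left algebra_simps intro!: sum.cong)

lemma ddashv_dadd_left: "ddashv (dadd f g) h = dadd (ddashv f h) (ddashv g h)"
  by (auto simp: fun_eq_iff ddashv_def dadd_def sum.distrib[symmetric] algebra_simps intro!: sum.cong)

lemma ddashv_dadd_right: "ddashv h (dadd f g) = dadd (ddashv h f) (ddashv h g)"
  by (auto simp: fun_eq_iff ddashv_def dadd_def sum.distrib[symmetric] intro!: sum.cong)
    (simp_all add: sum.distrib algebra_simps)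

lemma ddashv_dscale_left: "ddashv (dscale c f) h = dscale c (ddashv f h)"
  by (auto simp: fun_eq_iff ddashv_def dscale_def sum_distrib_left algebra_simps intro!: sum.cong)

lemma ddashv_dscale_right: "ddashv h (dscale c f) = dscale c (ddashv h f)"
  by (auto simp: fun_eq_iff ddashv_def dscale_def sum_distrib_left algebra_simps intro!: sum.cong)

lemma dscale_zero [simp]: "dscale 0 f = dzero"
  by (simp add: dscale_def dzero_def fun_eq_iff)

lemma dscale_dscale: "dscale a (dscale b f) = dscale (a * b) f"
  by (simp add: dscale_def fun_eq_iff)

lemmas dvdash_dzero = dvdash_dscale_left[of 0 dzero, simplified] dvdash_dscale_right[of _ 0 dzero, simplified]
lemmas ddashv_dzero = ddashv_dscale_left[of 0 dzero, simplified] ddashv_dscale_right[of _ 0 dzero, simplified]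

lemma jl_dadd_left: "jl (dadd f g) h = dadd (jl f h) (jl g h)"
  by (simp add: jl_def dvdash_dadd_left ddashv_dadd_right) (simp add: fun_eq_iff dadd_def dscale_def algebra_simps)

lemma jl_dadd_right: "jl h (dadd f g) = dadd (jl h f) (jl h g)"
  by (simp add: jl_def dvdash_dadd_right ddashv_dadd_left) (simp add: fun_eq_iff dadd_def dscale_def algebra_simps)

lemma jl_dscale_left: "jl (dscale c f) h = dscale c (jl f h)"
  by (simp add: jl_def dvdash_dscale_left ddashv_dscale_right) (simp add: fun_eq_iff dadd_def dscale_def algebra_simps)

lemma jl_dscale_right: "jl h (dscale c f) = dscale c (jl h f)"
  by (simp add: jl_def dvdash_dscale_right ddashv_dscale_left) (simp add: fun_eq_iff dadd_def dscale_def algebra_simps)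

lemmas jl_dzero = jl_dscale_left[of 0 dzero, simplified] jl_dscale_right[of _ 0 dzero, simplified]

lemma jr_eq_jl_swap: "jr a b = jl b a"
  by (simp add: jr_def jl_def dadd_def add.commute)

section \<open>Homogeneous components\<close>

definition agree_deg :: "'k::field dias \<Rightarrow> 'k dias \<Rightarrow> nat \<Rightarrow> bool" where
  "agree_deg f g n \<longleftrightarrow> (\<forall>u i. length u = n \<longrightarrow> i < n \<longrightarrow> f (u, i) = g (u, i))"

abbreviation vanishes_deg :: "'k::field dias \<Rightarrow> nat \<Rightarrow> bool" where
  "vanishes_deg f n \<equiv> agree_deg f dzero n"

lemma agree_deg_refl [simp]: "agree_deg f f n"
  by (simp add: agree_deg_def)

lemma agree_deg_0 [simp]: "agree_deg f g 0"
  by (simp add: agree_deg_def)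

text \<open>The degree n part of a product of f and g is determined by the degree m1 part of f and
  the degree m2 part of g, m1 + m2 = n; a splitting contributes nothing when either factor
  vanishes there.\<close>
definition split_agree :: "'k::field dias \<Rightarrow> 'k dias \<Rightarrow> 'k dias \<Rightarrow> 'k dias \<Rightarrow> nat \<Rightarrow> bool" where
  "split_agree f g f' g' n \<longleftrightarrow> (\<forall>m1 m2. 1 \<le> m1 \<longrightarrow> 1 \<le> m2 \<longrightarrow> m1 + m2 = n \<longrightarrow>
     (agree_deg f f' m1 \<and> agree_deg g g' m2) \<or> (vanishes_deg f m1 \<and> vanishes_deg f' m1) \<or>
     (vanishes_deg g m2 \<and> vanishes_deg g' m2))"

lemma dvdash_eq_at_deg:
  assumes "length w = n" "k < n" "split_agree f g f' g' n"
  shows "dvdash f g (w, k) = dvdash f' g' (w, k)"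
  unfolding dvdash_def
proof (simp, rule sum.cong[OF refl])
  fix m assume m: "m \<in> {Suc 0..<length w}"
  have split: "(agree_deg f f' m \<and> agree_deg g g' (n - m)) \<or> (vanishes_deg f m \<and> vanishes_deg f' m) \<or>
      (vanishes_deg g (n - m) \<and> vanishes_deg g' (n - m))"
    using assms(1,3) m unfolding split_agree_def by (metis atLeastLessThan_iff le_add_diff_inverse
        less_imp_le_nat zero_less_diff Suc_leI One_nat_def)
  have len: "length (take m w) = m" "length (drop m w) = n - m"
    using m assms(1) by auto
  show "(if m \<le> k then (\<Sum>i<m. f (take m w, i)) * g (drop m w, k - m) else 0) =
        (if m \<le> k then (\<Sum>i<m. f' (take m w, i)) * g' (drop m w, k - m) else 0)"
  proof (cases "m \<le> k")
    case True
    have km: "k - m < n - m"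
      using True assms(2) by auto
    from split show ?thesis
    proof (elim disjE conjE)
      assume f: "agree_deg f f' m" and g: "agree_deg g g' (n - m)"
      have "(\<Sum>i<m. f (take m w, i)) = (\<Sum>i<m. f' (take m w, i))"
        using f len unfolding agree_deg_def by (intro sum.cong) auto
      then show ?thesis
        using g len km unfolding agree_deg_def by simp
    next
      assume "vanishes_deg f m" "vanishes_deg f' m"
      then show ?thesis
        using len unfolding agree_deg_def dzero_def by simp
    next
      assume "vanishes_deg g (n - m)" "vanishes_deg g' (n - m)"
      then show ?thesis
        using len km unfolding agree_deg_def dzero_def by simp
    qed
  qed simp
qed

lemma ddashv_eq_at_deg:
  assumes "length w = n" "k < n" "split_agree f g f' g' n"
  shows "ddashv g f (w, k) = ddashv g' f' (w, k)"
  unfolding ddashv_def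
proof (simp, rule sum.cong[OF refl])
  fix m assume m: "m \<in> {Suc 0..<length w}"
  have split: "(agree_deg f f' (n - m) \<and> agree_deg g g' m) \<or>
      (vanishes_deg f (n - m) \<and> vanishes_deg f' (n - m)) \<or> (vanishes_deg g m \<and> vanishes_deg g' m)"
    using assms(1,3) m unfolding split_agree_def by (metis atLeastLessThan_iff le_add_diff_inverse2
        less_imp_le_nat zero_less_diff Suc_leI One_nat_def)
  have len: "length (take m w) = m" "length (drop m w) = n - m"
    using m assms(1) by auto
  show "(if k < m then g (take m w, k) * (\<Sum>j<length w - m. f (drop m w, j)) else 0) =
        (if k < m then g' (take m w, k) * (\<Sum>j<length w - m. f' (drop m w, j)) else 0)"
  proof (cases "k < m")
    case True
    from split show ?thesis
    proof (elim disjE conjE)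
      assume f: "agree_deg f f' (n - m)" and g: "agree_deg g g' m"
      have "(\<Sum>j<length w - m. f (drop m w, j)) = (\<Sum>j<length w - m. f' (drop m w, j))"
        using f len assms(1) unfolding agree_deg_def by (intro sum.cong) auto
      then show ?thesis
        using g len True unfolding agree_deg_def by simp
    next
      assume "vanishes_deg f (n - m)" "vanishes_deg f' (n - m)"
      then show ?thesis
        using len assms(1) unfolding agree_deg_def dzero_def by simp
    next
      assume "vanishes_deg g m" "vanishes_deg g' m"
      then show ?thesis
        using len True unfolding agree_deg_def dzero_def by simp
    qed
  qed simp
qed

lemma jl_eq_at_deg:
  assumes "length w = n" "k < n" "split_agree f g f' g' n"
  shows "jl f g (w, k) = jl f' g' (w, k)"
  using dvdash_eq_at_deg[OF assms] ddashv_eq_at_deg[OF assms]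
  by (simp add: jl_def dscale_def dadd_def)

section \<open>Jordan words\<close>

datatype jword = JX | JY | JMul jword jword

fun jdeg :: "jword \<Rightarrow> nat" where
  "jdeg JX = 1"
| "jdeg JY = 1"
| "jdeg (JMul a b) = jdeg a + jdeg b"

fun jval :: "jword \<Rightarrow> 'k::field dias" where
  "jval JX = dgen False"
| "jval JY = dgen True"
| "jval (JMul a b) = jl (jval a) (jval b)"

lemma jdeg_pos: "1 \<le> jdeg t"
  by (induction t) auto

lemma jval_in_DiSJ: "jval t \<in> DiSJ"
  by (induction t) (auto intro: DiSJ.intros)

lemma jval_vanishes_off_deg: "n \<noteq> jdeg t \<Longrightarrow> vanishes_deg (jval t :: 'k::field dias) n"
proof (induction t arbitrary: n)
  case (JMul a b)
  have "split_agree (jval a :: 'k dias) (jval b) dzero dzero n"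
    unfolding split_agree_def
  proof (intro allI impI)
    fix m1 m2 assume "m1 + m2 = n"
    then have "m1 \<noteq> jdeg a \<or> m2 \<noteq> jdeg b"
      using JMul.prems by auto
    then show "agree_deg (jval a :: 'k dias) dzero m1 \<and> agree_deg (jval b :: 'k dias) dzero m2 \<or>
        vanishes_deg (jval a :: 'k dias) m1 \<and> vanishes_deg dzero m1 \<or>
        vanishes_deg (jval b :: 'k dias) m2 \<and> vanishes_deg dzero m2"
      using JMul.IH by auto
  qed
  then show ?case
    unfolding agree_deg_def by (metis jl_dzero(1) jl_eq_at_deg jval.simps(3))
qed (auto simp: agree_deg_def dgen_def dzero_def)

fun lincomb :: "('k::field \<times> jword) list \<Rightarrow> 'k dias" where
  "lincomb [] = dzero"
| "lincomb ((c, t) # L) = dadd (dscale c (jval t)) (lincomb L)"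

lemma lincomb_append: "lincomb (L1 @ L2) = dadd (lincomb L1) (lincomb L2)"
  by (induction L1 rule: lincomb.induct) (auto simp: dadd_def dzero_def fun_eq_iff)

lemma lincomb_scale: "lincomb (map (\<lambda>(c, t). (d * c, t)) L) = dscale d (lincomb L)"
  by (induction L rule: lincomb.induct) (auto simp: dadd_def dzero_def dscale_def fun_eq_iff algebra_simps)

lemma jl_jval_lincomb: "jl (jval t) (lincomb L) = lincomb (map (\<lambda>(d, u). (d, JMul t u)) L)"
  by (induction L rule: lincomb.induct) (auto simp: jl_dzero jl_dadd_right jl_dscale_right)

lemma jl_lincomb:
  "jl (lincomb L1) (lincomb L2) = lincomb (concat (map (\<lambda>(c, t). map (\<lambda>(d, u). (c * d, JMul t u)) L2) L1))"
proof (induction L1 rule: lincomb.induct)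
  case (2 c t L)
  have "lincomb (map (\<lambda>(d, u). (c * d, JMul t u)) L2) = dscale c (lincomb (map (\<lambda>(d, u). (d, JMul t u)) L2))"
    by (induction L2) (auto simp: dadd_def dscale_def dzero_def fun_eq_iff algebra_simps)
  then show ?case
    using 2 by (simp add: lincomb_append jl_dadd_left jl_dscale_left jl_jval_lincomb)
qed (simp add: jl_dzero)

lemma DiSJ_lincomb: "a \<in> DiSJ \<Longrightarrow> \<exists>L. a = lincomb L"
proof (induction rule: DiSJ.induct)
  case gen_x
  have "lincomb [(1, JX)] = dgen False"
    by (simp add: dadd_def dscale_def dzero_def fun_eq_iff)
  then show ?case by metis
next
  case gen_y
  have "lincomb [(1, JY)] = dgen True"
    by (simp add: dadd_def dscale_def dzero_def fun_eq_iff)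
  then show ?case by metis
next
  case zero
  show ?case by (metis lincomb.simps(1))
next
  case (add a b)
  then show ?case by (metis lincomb_append)
next
  case (scale a c)
  then show ?case by (metis lincomb_scale)
next
  case (opl a b)
  then show ?case by (metis jl_lincomb)
next
  case (opr a b)
  then show ?case by (metis jl_lincomb jr_eq_jl_swap)
qed

section \<open>Functionals vanishing on the ideal\<close>

type_synonym zcomb = "((bool list \<times> nat) \<times> int) list"

definition functional :: "zcomb \<Rightarrow> 'k::field dias \<Rightarrow> 'k" where
  "functional lam f = sum_list (map (\<lambda>(m, c). of_int c * f m) lam)"

definition supported_deg :: "zcomb \<Rightarrow> nat \<Rightarrow> bool" where
  "supported_deg lam N \<longleftrightarrow> (\<forall>((w, i), c) \<in> set lam. length w = N \<and> i < N)"

lemma functional_dadd: "functional lam (dadd f g) = functional lam f + functional lam g"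
  by (induction lam) (auto simp: functional_def dadd_def algebra_simps)

lemma functional_dscale: "functional lam (dscale c f) = c * functional lam f"
  by (induction lam) (auto simp: functional_def dscale_def algebra_simps)

lemma functional_eq_at_deg:
  assumes "supported_deg lam N" "agree_deg f g N"
  shows "functional lam f = functional lam g"
  using assms unfolding functional_def supported_deg_def agree_deg_def
  by (intro arg_cong[where f = sum_list] map_cong) auto

fun mul_op :: "bool \<times> jword \<Rightarrow> 'k::field dias \<Rightarrow> 'k dias" where
  "mul_op (s, t) f = (if s then jl (jval t) f else jl f (jval t))"

fun Phi :: "zcomb \<Rightarrow> (bool \<times> jword) list \<Rightarrow> 'k::field dias \<Rightarrow> 'k" where
  "Phi lam [] f = functional lam f"
| "Phi lam (q # p) f = Phi lam p (mul_op q f)"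

definition pdeg :: "(bool \<times> jword) list \<Rightarrow> nat" where
  "pdeg p = sum_list (map (jdeg \<circ> snd) p)"

lemma pdeg_simps [simp]: "pdeg [] = 0" "pdeg (q # p) = jdeg (snd q) + pdeg p"
  by (simp_all add: pdeg_def)

lemma Phi_dadd: "Phi lam p (dadd f g) = Phi lam p f + Phi lam p g"
  by (induction p arbitrary: f g)
    (auto simp: functional_dadd jl_dadd_left jl_dadd_right split: prod.splits)

lemma Phi_dscale: "Phi lam p (dscale c f) = c * Phi lam p f"
  by (induction p arbitrary: f)
    (auto simp: functional_dscale jl_dscale_left jl_dscale_right split: prod.splits)

lemma Phi_dzero: "Phi lam p dzero = 0"
  using Phi_dscale[of lam p 0 dzero] by simp

lemma mul_op_eq_at_deg:
  fixes f f' :: "'k::field dias"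
  assumes "agree_deg f f' (j - jdeg t)"
  shows "agree_deg (mul_op (s, t) f) (mul_op (s, t) f') j"
  unfolding agree_deg_def
proof (intro allI impI)
  fix u :: "bool list" and i
  assume u: "length u = j" "i < j"
  have factor: "agree_deg f f' m \<or> vanishes_deg (jval t :: 'k dias) m'" if "m + m' = j" for m m'
    using assms that jval_vanishes_off_deg[of m' t] by (cases "m' = jdeg t") auto
  show "mul_op (s, t) f (u, i) = mul_op (s, t) f' (u, i)"
  proof (cases s)
    case True
    have "split_agree (jval t) f (jval t) f' j"
      unfolding split_agree_def using factor by (metis add.commute agree_deg_refl)
    then show ?thesis
      using jl_eq_at_deg[OF u] True by simp
  next
    case False
    have "split_agree f (jval t) f' (jval t) j"
      unfolding split_agree_def using factor by (metis agree_deg_refl)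
    then show ?thesis
      using jl_eq_at_deg[OF u] False by simp
  qed
qed

lemma Phi_eq_at_deg:
  assumes "supported_deg lam N" "\<forall>j. j + pdeg p = N \<longrightarrow> agree_deg f f' j"
  shows "Phi lam p f = Phi lam p f'"
  using assms(2)
proof (induction p arbitrary: f f')
  case Nil
  then show ?case
    using functional_eq_at_deg[OF assms(1)] by simp
next
  case (Cons q p)
  obtain s t where q: "q = (s, t)"
    by (cases q)
  have "agree_deg f f' (j - jdeg t)" if "j + pdeg p = N" for j
    using Cons.prems that q by (cases "jdeg t \<le> j") auto
  then have "agree_deg (mul_op q f) (mul_op q f') j" if "j + pdeg p = N" for j
    using that q mul_op_eq_at_deg by blast
  then show ?case
    using Cons.IH by simp
qed

lemma Phi_jl_lincomb_left:
  "Phi lam p (jl (lincomb L) f) = sum_list (map (\<lambda>(c, t). c * Phi lam ((True, t) # p) f) L)"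
  by (induction L rule: lincomb.induct) (simp_all add: jl_dzero Phi_dzero jl_dadd_left jl_dscale_left Phi_dadd Phi_dscale)

lemma Phi_jl_lincomb_right:
  "Phi lam p (jl f (lincomb L)) = sum_list (map (\<lambda>(c, t). c * Phi lam ((False, t) # p) f) L)"
  by (induction L rule: lincomb.induct) (simp_all add: jl_dzero Phi_dzero jl_dadd_right jl_dscale_right Phi_dadd Phi_dscale)

lemma kelem_eq_jval: "kelem = dadd (jval (JMul JX JX)) (dscale (-1) (jval (JMul JY JY)))"
  by (simp add: kelem_def jl_def dsub_def dadd_def dscale_def fun_eq_iff algebra_simps)

lemma kelem_vanishes_off_deg_2: "n \<noteq> 2 \<Longrightarrow> vanishes_deg (kelem :: 'k::field dias) n"
  using jval_vanishes_off_deg[of n "JMul JX JX", where 'k = 'k] jval_vanishes_off_deg[of n "JMul JY JY", where 'k = 'k]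
  by (auto simp: kelem_eq_jval agree_deg_def dadd_def dscale_def dzero_def)

lemma Phi_kelem_eq_0:
  assumes lam: "supported_deg lam N" and deg: "\<forall>p. pdeg p = N - 2 \<longrightarrow> Phi lam p (kelem :: 'k::field dias) = 0"
  shows "Phi lam p (kelem :: 'k dias) = 0"
proof (cases "pdeg p = N - 2")
  case False
  have "Phi lam p (kelem :: 'k dias) = Phi lam p dzero"
  proof (rule Phi_eq_at_deg[OF lam], intro allI impI)
    fix j assume "j + pdeg p = N"
    with False have "j \<noteq> 2" by auto
    then show "vanishes_deg kelem j"
      by (rule kelem_vanishes_off_deg_2)
  qed
  then show ?thesis
    by (simp add: Phi_dzero)
qed (use deg in blast)

lemma Phi_jl_DiSJ_eq_0:
  assumes "a \<in> DiSJ" and "\<And>p. Phi lam p f = 0"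
  shows "Phi lam p (jl a f) = 0" "Phi lam p (jl f a) = 0"
proof -
  obtain L where "a = lincomb L"
    using DiSJ_lincomb[OF assms(1)] by blast
  moreover have "Phi lam p (jl (jval t) f) = 0" "Phi lam p (jl f (jval t)) = 0" for t p
    using assms(2)[of "(True, t) # p"] assms(2)[of "(False, t) # p"] by simp_all
  ultimately show "Phi lam p (jl a f) = 0" "Phi lam p (jl f a) = 0"
    by (simp_all add: Phi_jl_lincomb_left Phi_jl_lincomb_right split_def)
qed

lemma Phi_eq_0_on_Iideal:
  assumes k: "\<And>p. Phi lam p (kelem :: 'k::field dias) = 0" and i: "i \<in> Iideal"
  shows "Phi lam p (i :: 'k dias) = 0"
  using i
  by (induction arbitrary: p rule: Iideal.induct)
    (simp_all add: k Phi_dzero Phi_dadd Phi_dscale Phi_jl_DiSJ_eq_0 jr_eq_jl_swap)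

text \<open>Elements of DiAs<x,y> with integer coefficients are represented by lists, so that the
  finitely many identities the proof needs can be checked by evaluation.\<close>

definition zcoeff :: "zcomb \<Rightarrow> bool list \<times> nat \<Rightarrow> int" where
  "zcoeff L m = sum_list (map snd (filter (\<lambda>x. fst x = m) L))"

definition of_zcomb :: "zcomb \<Rightarrow> 'k::field dias" where
  "of_zcomb L = (\<lambda>m. of_int (zcoeff L m))"

definition zvalid :: "zcomb \<Rightarrow> bool" where
  "zvalid L \<longleftrightarrow> (\<forall>((w, i), c) \<in> set L. i < length w)"

definition zvdash :: "zcomb \<Rightarrow> zcomb \<Rightarrow> zcomb" where
  "zvdash A B = concat (map (\<lambda>((u, i), c). map (\<lambda>((v, j), d). ((u @ v, length u + j), c * d)) B) A)"

definition zdashv :: "zcomb \<Rightarrow> zcomb \<Rightarrow> zcomb" where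
  "zdashv A B = concat (map (\<lambda>((u, i), c). map (\<lambda>((v, j), d). ((u @ v, i), c * d)) B) A)"

text \<open>Twice the Jordan product, so that coefficients stay integral.\<close>
definition zjmul :: "zcomb \<Rightarrow> zcomb \<Rightarrow> zcomb" where
  "zjmul A B = zvdash A B @ zdashv B A"

definition zneg :: "zcomb \<Rightarrow> zcomb" where
  "zneg L = map (\<lambda>(m, c). (m, - c)) L"

lemma zcoeff_simps [simp]:
  "zcoeff [] m = 0"
  "zcoeff (x # L) m = (if fst x = m then snd x else 0) + zcoeff L m"
  "zcoeff (A @ B) m = zcoeff A m + zcoeff B m"
  by (simp_all add: zcoeff_def)

lemma zcoeff_zneg [simp]: "zcoeff (zneg L) m = - zcoeff L m"
  by (induction L) (auto simp: zneg_def)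

lemma zcoeff_notin: "m \<notin> fst ` set L \<Longrightarrow> zcoeff L m = 0"
  by (induction L) auto

lemma of_zcomb_Nil: "of_zcomb [] = dzero"
  by (simp add: of_zcomb_def dzero_def)

lemma of_zcomb_append: "of_zcomb (A @ B) = dadd (of_zcomb A) (of_zcomb B)"
  by (simp add: of_zcomb_def dadd_def fun_eq_iff)

lemma of_zcomb_Cons: "of_zcomb (x # L) = dadd (of_zcomb [x]) (of_zcomb L)"
  using of_zcomb_append[of "[x]" L] by simp

lemma of_zcomb_zneg: "of_zcomb (zneg L) = dscale (-1) (of_zcomb L)"
  by (simp add: of_zcomb_def dscale_def fun_eq_iff)

lemma of_zcomb_single: "of_zcomb [((u, i), c)] = (\<lambda>m. if m = (u, i) then of_int c else 0)"
  by (auto simp: of_zcomb_def fun_eq_iff)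

lemma zvalid_simps [simp]:
  "zvalid []"
  "zvalid (x # L) \<longleftrightarrow> snd (fst x) < length (fst (fst x)) \<and> zvalid L"
  "zvalid (A @ B) \<longleftrightarrow> zvalid A \<and> zvalid B"
  by (auto simp: zvalid_def split: prod.splits)

lemma zvalid_zvdash: "zvalid A \<Longrightarrow> zvalid B \<Longrightarrow> zvalid (zvdash A B)"
  by (auto simp: zvalid_def zvdash_def split: prod.splits)

lemma zvalid_zdashv: "zvalid A \<Longrightarrow> zvalid B \<Longrightarrow> zvalid (zdashv A B)"
  by (auto simp: zvalid_def zdashv_def split: prod.splits)

lemma zvalid_zjmul: "zvalid A \<Longrightarrow> zvalid B \<Longrightarrow> zvalid (zjmul A B)"
  by (simp add: zjmul_def zvalid_zvdash zvalid_zdashv)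

lemma zvalid_zneg: "zvalid A \<Longrightarrow> zvalid (zneg A)"
  by (auto simp: zvalid_def zneg_def split: prod.splits)

lemma zvdash_Cons_left: "zvdash (x # A) B = zvdash [x] B @ zvdash A B"
  by (simp add: zvdash_def)

lemma zvdash_simps [simp]:
  "zvdash [] B = []"
  "zvdash [((u, i), c)] [] = []"
  "zvdash [((u, i), c)] (((v, j), d) # B) = ((u @ v, length u + j), c * d) # zvdash [((u, i), c)] B"
  by (simp_all add: zvdash_def)

lemma zdashv_Cons_left: "zdashv (x # A) B = zdashv [x] B @ zdashv A B"
  by (simp add: zdashv_def)

lemma zdashv_simps [simp]:
  "zdashv [] B = []"
  "zdashv [((u, i), c)] [] = []"
  "zdashv [((u, i), c)] (((v, j), d) # B) = ((u @ v, i), c * d) # zdashv [((u, i), c)] B"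
  by (simp_all add: zdashv_def)

lemma sum_lessThan_indicator:
  "(\<Sum>i'<(m::nat). if (U, i') = (u, i) then (c::'k::field) else 0) = (if U = u \<and> i < m then c else 0)"
  by (cases "U = u") (simp_all add: sum.delta)

lemma dvdash_single:
  assumes "i < length u" "j < length v"
  shows "dvdash (of_zcomb [((u, i), c)]) (of_zcomb [((v, j), d)]) =
    (of_zcomb [((u @ v, length u + j), c * d)] :: 'k::field dias)"
proof (rule ext, clarify)
  fix w k
  let ?S = "\<lambda>m. if m = length u then (if w = u @ v \<and> k = length u + j then (of_int (c * d) :: 'k) else 0) else 0"
  have "dvdash (of_zcomb [((u, i), c)]) (of_zcomb [((v, j), d)]) (w, k) = (\<Sum>m\<in>{1..<length w}. ?S m)"
    unfolding dvdash_def of_zcomb_single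
  proof (simp only: split_conv sum_lessThan_indicator, rule sum.cong[OF refl])
    fix m assume m: "m \<in> {1..<length w}"
    show "(if m \<le> k then (if take m w = u \<and> i < m then of_int c else 0) *
          (if (drop m w, k - m) = (v, j) then of_int d else 0) else 0) = ?S m"
    proof (cases "m \<le> k \<and> take m w = u \<and> drop m w = v \<and> k - m = j")
      case True
      then have "length u = m" "w = u @ v"
        using m by auto
      then show ?thesis
        using True assms by auto
    next
      case False
      then have "\<not> (m = length u \<and> w = u @ v \<and> k = length u + j)"
        by auto
      then show ?thesis
        using False by (auto simp: if_split)
    qed
  qed
  also have "\<dots> = of_zcomb [((u @ v, length u + j), c * d)] (w, k)"
    using assms by (auto simp: sum.delta' of_zcomb_single)
  finally show "dvdash (of_zcomb [((u, i), c)]) (of_zcomb [((v, j), d)]) (w, k) =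
      (of_zcomb [((u @ v, length u + j), c * d)] :: 'k dias) (w, k)" .
qed

lemma ddashv_single:
  assumes "i < length u" "j < length v"
  shows "ddashv (of_zcomb [((u, i), c)]) (of_zcomb [((v, j), d)]) =
    (of_zcomb [((u @ v, i), c * d)] :: 'k::field dias)"
proof (rule ext, clarify)
  fix w k
  let ?S = "\<lambda>m. if m = length u then (if w = u @ v \<and> k = i then (of_int (c * d) :: 'k) else 0) else 0"
  have "ddashv (of_zcomb [((u, i), c)]) (of_zcomb [((v, j), d)]) (w, k) = (\<Sum>m\<in>{1..<length w}. ?S m)"
    unfolding ddashv_def of_zcomb_single
  proof (simp only: split_conv sum_lessThan_indicator, rule sum.cong[OF refl])
    fix m assume m: "m \<in> {1..<length w}"
    show "(if k < m then (if (take m w, k) = (u, i) then of_int c else 0) *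
          (if drop m w = v \<and> j < length w - m then of_int d else 0) else 0) = ?S m"
    proof (cases "k < m \<and> take m w = u \<and> drop m w = v \<and> k = i")
      case True
      then have "length u = m" "w = u @ v"
        using m by auto
      then show ?thesis
        using True assms by auto
    next
      case False
      then have "\<not> (m = length u \<and> w = u @ v \<and> k = i)"
        using assms by auto
      then show ?thesis
        using False by (auto simp: if_split)
    qed
  qed
  also have "\<dots> = of_zcomb [((u @ v, i), c * d)] (w, k)"
    using assms by (auto simp: sum.delta' of_zcomb_single)
  finally show "ddashv (of_zcomb [((u, i), c)]) (of_zcomb [((v, j), d)]) (w, k) =
      (of_zcomb [((u @ v, i), c * d)] :: 'k dias) (w, k)" .
qed

lemma of_zcomb_zvdash_single:
  assumes "zvalid [((u, i), c)]" "zvalid B"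
  shows "dvdash (of_zcomb [((u, i), c)]) (of_zcomb B) = (of_zcomb (zvdash [((u, i), c)] B) :: 'k::field dias)"
  using assms(2)
proof (induction B)
  case Nil
  then show ?case by (simp add: of_zcomb_Nil dvdash_dzero)
next
  case (Cons y B)
  obtain v j d where y: "y = ((v, j), d)"
    by (metis prod.collapse)
  have "dvdash (of_zcomb [((u, i), c)]) (of_zcomb (y # B)) =
      dadd (dvdash (of_zcomb [((u, i), c)]) (of_zcomb [y])) (dvdash (of_zcomb [((u, i), c)]) (of_zcomb B))"
    by (subst of_zcomb_Cons) (rule dvdash_dadd_right)
  also have "\<dots> = dadd (of_zcomb [((u @ v, length u + j), c * d)]) (of_zcomb (zvdash [((u, i), c)] B) :: 'k dias)"
    using Cons assms(1) y by (simp add: dvdash_single)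
  also have "\<dots> = of_zcomb (zvdash [((u, i), c)] (y # B))"
    using y of_zcomb_Cons[of "((u @ v, length u + j), c * d)", symmetric] by simp
  finally show ?case .
qed

lemma of_zcomb_zdashv_single:
  assumes "zvalid [((u, i), c)]" "zvalid B"
  shows "ddashv (of_zcomb [((u, i), c)]) (of_zcomb B) = (of_zcomb (zdashv [((u, i), c)] B) :: 'k::field dias)"
  using assms(2)
proof (induction B)
  case Nil
  then show ?case by (simp add: of_zcomb_Nil ddashv_dzero)
next
  case (Cons y B)
  obtain v j d where y: "y = ((v, j), d)"
    by (metis prod.collapse)
  have "ddashv (of_zcomb [((u, i), c)]) (of_zcomb (y # B)) =
      dadd (ddashv (of_zcomb [((u, i), c)]) (of_zcomb [y])) (ddashv (of_zcomb [((u, i), c)]) (of_zcomb B))"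
    by (subst of_zcomb_Cons) (rule ddashv_dadd_right)
  also have "\<dots> = dadd (of_zcomb [((u @ v, i), c * d)]) (of_zcomb (zdashv [((u, i), c)] B) :: 'k dias)"
    using Cons assms(1) y by (simp add: ddashv_single)
  also have "\<dots> = of_zcomb (zdashv [((u, i), c)] (y # B))"
    using y of_zcomb_Cons[of "((u @ v, i), c * d)", symmetric] by simp
  finally show ?case .
qed

lemma of_zcomb_zvdash:
  "zvalid A \<Longrightarrow> zvalid B \<Longrightarrow> dvdash (of_zcomb A) (of_zcomb B) = (of_zcomb (zvdash A B) :: 'k::field dias)"
proof (induction A)
  case Nil
  then show ?case by (simp add: of_zcomb_Nil dvdash_dzero)
next
  case (Cons x A)
  obtain u i c where "x = ((u, i), c)"
    by (metis prod.collapse)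
  with Cons.prems have "dvdash (of_zcomb [x]) (of_zcomb B) = (of_zcomb (zvdash [x] B) :: 'k dias)"
    by (simp add: of_zcomb_zvdash_single)
  with Cons show ?case
    by (simp add: zvdash_Cons_left[of x A B] of_zcomb_Cons[of x A] dvdash_dadd_left of_zcomb_append)
qed

lemma of_zcomb_zdashv:
  "zvalid A \<Longrightarrow> zvalid B \<Longrightarrow> ddashv (of_zcomb A) (of_zcomb B) = (of_zcomb (zdashv A B) :: 'k::field dias)"
proof (induction A)
  case Nil
  then show ?case by (simp add: of_zcomb_Nil ddashv_dzero)
next
  case (Cons x A)
  obtain u i c where "x = ((u, i), c)"
    by (metis prod.collapse)
  with Cons.prems have "ddashv (of_zcomb [x]) (of_zcomb B) = (of_zcomb (zdashv [x] B) :: 'k dias)"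
    by (simp add: of_zcomb_zdashv_single)
  with Cons show ?case
    by (simp add: zdashv_Cons_left[of x A B] of_zcomb_Cons[of x A] ddashv_dadd_left of_zcomb_append)
qed

lemma of_zcomb_zjmul:
  assumes "(2::'k::field) \<noteq> 0" "zvalid A" "zvalid B"
  shows "of_zcomb (zjmul A B) = dscale 2 (jl (of_zcomb A) (of_zcomb B) :: 'k dias)"
  using assms
  by (simp add: zjmul_def of_zcomb_append of_zcomb_zvdash of_zcomb_zdashv jl_def dscale_def dadd_def fun_eq_iff)

fun zword :: "jword \<Rightarrow> zcomb" where
  "zword JX = [(([False], 0), 1)]"
| "zword JY = [(([True], 0), 1)]"
| "zword (JMul a b) = zjmul (zword a) (zword b)"

lemma zvalid_zword: "zvalid (zword t)"
  by (induction t) (simp_all add: zvalid_zjmul)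

lemma of_zcomb_zword:
  assumes "(2::'k::field) \<noteq> 0"
  shows "of_zcomb (zword t) = dscale (2 ^ (jdeg t - 1)) (jval t :: 'k dias)"
proof (induction t)
  case (JMul a b)
  have "of_zcomb (zword (JMul a b)) = dscale 2 (jl (of_zcomb (zword a)) (of_zcomb (zword b)) :: 'k dias)"
    using assms by (simp add: of_zcomb_zjmul zvalid_zword)
  also have "\<dots> = dscale (2 * 2 ^ (jdeg a - 1) * 2 ^ (jdeg b - 1)) (jval (JMul a b))"
    using JMul by (simp add: jl_dscale_left jl_dscale_right dscale_dscale mult_ac)
  also have "(2::'k) * 2 ^ (jdeg a - 1) * 2 ^ (jdeg b - 1) = 2 ^ (jdeg (JMul a b) - 1)"
    using jdeg_pos[of a] jdeg_pos[of b] by (simp add: power_add[symmetric] power_Suc[symmetric] del: power_Suc)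
  finally show ?case .
qed (auto simp: of_zcomb_single dscale_def dgen_def fun_eq_iff)

definition zk :: zcomb where
  "zk = zword (JMul JX JX) @ zneg (zword (JMul JY JY))"

lemma zvalid_zk: "zvalid zk"
  by (simp add: zk_def zvalid_zneg zvalid_zword del: zword.simps)

lemma of_zcomb_zk:
  assumes "(2::'k::field) \<noteq> 0"
  shows "of_zcomb zk = dscale 2 (kelem :: 'k dias)"
  using of_zcomb_zword[OF assms, of "JMul JX JX"] of_zcomb_zword[OF assms, of "JMul JY JY"]
  by (simp del: zword.simps jval.simps add: zk_def of_zcomb_append of_zcomb_zneg kelem_eq_jval
      dadd_def dscale_def fun_eq_iff algebra_simps)

definition zfunctional :: "zcomb \<Rightarrow> zcomb \<Rightarrow> int" where
  "zfunctional lam L = sum_list (map (\<lambda>(m, c). c * zcoeff L m) lam)"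

lemma functional_of_zcomb: "functional lam (of_zcomb L) = (of_int (zfunctional lam L) :: 'k::field)"
  by (induction lam) (auto simp: functional_def zfunctional_def of_zcomb_def)

fun zmul_op :: "bool \<times> jword \<Rightarrow> zcomb \<Rightarrow> zcomb" where
  "zmul_op (s, t) L = (if s then zjmul (zword t) L else zjmul L (zword t))"

fun zPhi :: "zcomb \<Rightarrow> (bool \<times> jword) list \<Rightarrow> zcomb \<Rightarrow> int" where
  "zPhi lam [] L = zfunctional lam L"
| "zPhi lam (q # p) L = zPhi lam p (zmul_op q L)"

lemma zvalid_zmul_op: "zvalid L \<Longrightarrow> zvalid (zmul_op q L)"
  by (cases q) (simp add: zvalid_zjmul zvalid_zword)

lemma of_zcomb_zmul_op:
  assumes "(2::'k::field) \<noteq> 0" "zvalid L"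
  shows "of_zcomb (zmul_op q L) = dscale (2 ^ jdeg (snd q)) (mul_op q (of_zcomb L) :: 'k dias)"
proof -
  obtain s t where q: "q = (s, t)"
    by (cases q)
  have "(2::'k) * 2 ^ (jdeg t - 1) = 2 ^ jdeg t"
    using jdeg_pos[of t] by (simp add: power_Suc[symmetric] del: power_Suc)
  then show ?thesis
    using assms q by (cases s)
      (simp_all add: of_zcomb_zjmul zvalid_zword of_zcomb_zword jl_dscale_left jl_dscale_right dscale_dscale)
qed

lemma of_int_zPhi:
  assumes "(2::'k::field) \<noteq> 0" "zvalid L"
  shows "(of_int (zPhi lam p L) :: 'k) = 2 ^ pdeg p * Phi lam p (of_zcomb L)"
  using assms(2)
proof (induction p arbitrary: L)
  case (Cons q p)
  have "(of_int (zPhi lam (q # p) L) :: 'k) = 2 ^ pdeg p * Phi lam p (of_zcomb (zmul_op q L))"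
    using Cons zvalid_zmul_op by simp
  also have "\<dots> = 2 ^ pdeg p * (2 ^ jdeg (snd q) * Phi lam p (mul_op q (of_zcomb L)))"
    using assms(1) Cons.prems by (simp add: of_zcomb_zmul_op Phi_dscale)
  finally show ?case
    by (simp add: power_add algebra_simps)
qed (simp add: functional_of_zcomb)

section \<open>A functional separating wA and wB modulo I\<close>

function jwords :: "nat \<Rightarrow> jword list" where
  "jwords n = (if n = 1 then [JX, JY]
     else concat (map (\<lambda>i. [JMul a b. a \<leftarrow> jwords i, b \<leftarrow> jwords (n - i)]) [1..<n]))"
  by pat_completeness auto
termination
  by (relation "measure id") auto

function mul_paths :: "nat \<Rightarrow> (bool \<times> jword) list list" where
  "mul_paths n = (if n = 0 then [[]]
     else concat (map (\<lambda>i. [(s, t) # p. s \<leftarrow> [True, False], t \<leftarrow> jwords i, p \<leftarrow> mul_paths (n - i)]) [1..<Suc n]))"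
  by pat_completeness auto
termination
  by (relation "measure id") auto

declare jwords.simps [simp del] mul_paths.simps [simp del]

lemma jword_in_jwords: "t \<in> set (jwords (jdeg t))"
proof (induction t)
  case (JMul a b)
  have "jdeg a \<in> set [1..<jdeg (JMul a b)]"
    using jdeg_pos[of a] jdeg_pos[of b] by auto
  with JMul show ?case
    using jdeg_pos[of a] jdeg_pos[of b] by (subst jwords.simps) force
qed (simp_all add: jwords.simps)

lemma path_in_mul_paths: "p \<in> set (mul_paths (pdeg p))"
proof (induction p)
  case Nil
  then show ?case by (simp add: mul_paths.simps)
next
  case (Cons q p)
  obtain s t where q: "q = (s, t)"
    by (cases q)
  let ?n = "pdeg (q # p)"
  have n: "?n \<noteq> 0" "?n - jdeg t = pdeg p" and i: "jdeg t \<in> set [1..<Suc ?n]"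
    using q jdeg_pos[of t] by auto
  have "q # p \<in> set [(s', t') # p'. s' \<leftarrow> [True, False], t' \<leftarrow> jwords (jdeg t), p' \<leftarrow> mul_paths (?n - jdeg t)]"
    using q n Cons.IH jword_in_jwords[of t] by (cases s) auto
  moreover have "x \<in> set (f i) \<Longrightarrow> i \<in> set xs \<Longrightarrow> x \<in> set (concat (map f xs))" for x f i xs
    by auto
  ultimately show ?case
    using i by (subst mul_paths.simps) (simp only: n(1) if_False)
qed

definition sep_functional :: zcomb where
  "sep_functional =
    [(([False, False, False, True, True], 3), (-2)), (([False, False, False, True, True], 4), 2),
     (([False, False, True, False, True], 4), 1), (([False, True, False, False, True], 4), (-1)),
     (([False, True, True, False, False], 1), 1), (([False, True, True, False, False], 2), (-1)),
     (([False, True, True, True, True], 3), (-2)), (([False, True, True, True, True], 4), 2),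
     (([True, False, False, True, False], 0), 4), (([True, False, False, True, False], 2), (-2)),
     (([True, False, False, True, False], 3), (-1)), (([True, False, True, False, False], 0), (-3)),
     (([True, False, True, False, False], 2), 1), (([True, False, True, False, False], 3), 2),
     (([True, False, True, False, False], 4), (-1)), (([True, False, True, True, True], 0), (-1)),
     (([True, False, True, True, True], 4), 1), (([True, True, False, False, False], 0), (-1)),
     (([True, True, False, False, False], 1), 1)]"

lemma supported_deg_sep_functional: "supported_deg sep_functional 5"
  by (simp add: supported_deg_def sep_functional_def)

lemma zPhi_sep_functional_zk: "list_all (\<lambda>p. zPhi sep_functional p zk = 0) (mul_paths 3)"
  by code_simp

lemma Phi_sep_functional_kelem:
  assumes "(2::'k::field) \<noteq> 0"
  shows "Phi sep_functional p (kelem :: 'k dias) = 0"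
proof (rule Phi_kelem_eq_0[OF supported_deg_sep_functional], intro allI impI)
  fix p assume "pdeg p = 5 - 2"
  then have "zPhi sep_functional p zk = 0"
    using zPhi_sep_functional_zk path_in_mul_paths[of p] by (simp add: list_all_iff)
  moreover have "(of_int (zPhi sep_functional p zk) :: 'k) = 2 ^ pdeg p * (2 * Phi sep_functional p kelem)"
    using assms by (simp add: of_int_zPhi zvalid_zk of_zcomb_zk Phi_dscale)
  ultimately show "Phi sep_functional p (kelem :: 'k dias) = 0"
    using assms by simp
qed

definition wA :: jword where
  "wA = JMul JX (JMul (JMul JX (JMul JX JY)) JY)"

definition wB :: jword where
  "wB = JMul (JMul JX (JMul JX JY)) (JMul JX JY)"

definition zdiff :: zcomb where
  "zdiff = zword wB @ zneg (zword wA)"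

lemma zfunctional_sep_functional_zdiff: "zfunctional sep_functional zdiff = 4"
  by code_simp

lemma of_zcomb_zdiff:
  assumes "(2::'k::field) \<noteq> 0"
  shows "of_zcomb zdiff = dscale 16 (dsub (jval wB) (jval wA) :: 'k dias)"
  using of_zcomb_zword[OF assms, of wB] of_zcomb_zword[OF assms, of wA]
  by (simp del: zword.simps jval.simps add: zdiff_def wA_def wB_def of_zcomb_append of_zcomb_zneg
      dsub_def dadd_def dscale_def fun_eq_iff algebra_simps)

theorem jval_wB_minus_wA_notin_Iideal:
  assumes "(2::'k::field) \<noteq> 0"
  shows "dsub (jval wB) (jval wA) \<notin> (Iideal :: 'k dias set)"
proof
  assume "dsub (jval wB) (jval wA) \<in> (Iideal :: 'k dias set)"
  then have "Phi sep_functional [] (dsub (jval wB) (jval wA) :: 'k dias) = 0"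
    using Phi_eq_0_on_Iideal Phi_sep_functional_kelem[OF assms] by blast
  then have "functional sep_functional (of_zcomb zdiff :: 'k dias) = 0"
    by (simp add: of_zcomb_zdiff[OF assms] functional_dscale)
  moreover have "functional sep_functional (of_zcomb zdiff :: 'k dias) = 2 * 2"
    by (simp add: functional_of_zcomb zfunctional_sep_functional_zdiff)
  ultimately show False
    using assms by (metis mult_eq_0_iff)
qed

lemma Iideal_subset_DiSJ: "i \<in> Iideal \<Longrightarrow> i \<in> DiSJ"
proof (induction rule: Iideal.induct)
  case gen
  then show ?case
    unfolding kelem_eq_jval by (intro DiSJ.add DiSJ.scale jval_in_DiSJ)
qed (auto intro: DiSJ.intros)

lemma coset_self: "a \<in> coset a"
  by (simp add: coset_def dsub_def dzero_def Iideal.zero[unfolded dzero_def])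

lemma coset_eqI:
  assumes "dsub a b \<in> Iideal"
  shows "coset a = coset b"
proof -
  have "dsub c b \<in> Iideal \<longleftrightarrow> dsub c a \<in> Iideal" for c
  proof
    assume "dsub c b \<in> Iideal"
    moreover have "dsub c a = dadd (dsub c b) (dscale (-1) (dsub a b))"
      by (simp add: dsub_def dadd_def dscale_def fun_eq_iff)
    ultimately show "dsub c a \<in> Iideal"
      using assms by (simp add: Iideal.add Iideal.scale)
  next
    assume "dsub c a \<in> Iideal"
    moreover have "dsub c b = dadd (dsub c a) (dsub a b)"
      by (simp add: dsub_def dadd_def fun_eq_iff)
    ultimately show "dsub c b \<in> Iideal"
      using assms by (simp add: Iideal.add)
  qed
  then show ?thesis
    unfolding coset_def by blast
qed

lemma coset_eq_iff: "coset a = coset b \<longleftrightarrow> dsub a b \<in> Iideal"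
proof
  assume "coset a = coset b"
  with coset_self have "a \<in> coset b"
    by metis
  then show "dsub a b \<in> Iideal"
    by (simp add: coset_def)
qed (rule coset_eqI)

lemma rep_coset: "dsub (rep (coset a)) a \<in> Iideal"
proof -
  have "rep (coset a) \<in> coset a"
    unfolding rep_def by (rule someI[of _ a]) (rule coset_self)
  then show ?thesis
    by (simp add: coset_def)
qed

lemma ql_coset:
  assumes a: "a \<in> DiSJ" and b: "b \<in> DiSJ"
  shows "ql (coset a) (coset b) = coset (jl a b)"
  unfolding ql_def
proof (rule coset_eqI)
  define i1 where "i1 = dsub (rep (coset a)) a"
  define i2 where "i2 = dsub (rep (coset b)) b"
  have i: "i1 \<in> Iideal" "i2 \<in> Iideal"
    by (simp_all add: i1_def i2_def rep_coset)
  have "rep (coset a) = dadd a i1" "rep (coset b) = dadd b i2"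
    by (simp_all add: i1_def i2_def dsub_def dadd_def fun_eq_iff)
  then have "dsub (jl (rep (coset a)) (rep (coset b))) (jl a b) = dadd (jl a i2) (dadd (jl i1 b) (jl i1 i2))"
    by (simp add: jl_dadd_left jl_dadd_right) (simp add: dsub_def dadd_def fun_eq_iff)
  also have "\<dots> \<in> Iideal"
    using a b i Iideal_subset_DiSJ[OF i(2)] by (intro Iideal.add Iideal.ml Iideal.mr)
  finally show "dsub (jl (rep (coset a)) (rep (coset b))) (jl a b) \<in> Iideal" .
qed

lemma coset_in_Quot: "a \<in> DiSJ \<Longrightarrow> coset a \<in> Quot"
  by (simp add: Quot_def)

fun jeval :: "('k::field \<Rightarrow> 'd::ab_group_add \<Rightarrow> 'd) \<Rightarrow> ('d \<Rightarrow> 'd \<Rightarrow> 'd) \<Rightarrow> ('d \<Rightarrow> 'd \<Rightarrow> 'd) \<Rightarrow>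
    (bool \<Rightarrow> 'd) \<Rightarrow> jword \<Rightarrow> 'd" where
  "jeval smul dl dr g JX = g False"
| "jeval smul dl dr g JY = g True"
| "jeval smul dl dr g (JMul a b) = plus_l smul dl dr (jeval smul dl dr g a) (jeval smul dl dr g b)"

lemma jeval_coset:
  fixes \<phi> :: "'k::field dias set \<Rightarrow> 'd::ab_group_add"
  assumes "\<forall>A\<in>Quot. \<forall>B\<in>Quot. \<phi> (ql A B) = plus_l smul dl dr (\<phi> A) (\<phi> B)"
  shows "jeval smul dl dr (\<lambda>c. \<phi> (coset (dgen c))) t = \<phi> (coset (jval t))"
proof (induction t)
  case (JMul a b)
  have "\<phi> (coset (jval (JMul a b))) = \<phi> (ql (coset (jval a)) (coset (jval b)))"
    by (simp add: ql_coset jval_in_DiSJ)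
  also have "\<dots> = plus_l smul dl dr (\<phi> (coset (jval a))) (\<phi> (coset (jval b)))"
    using assms coset_in_Quot jval_in_DiSJ by blast
  finally show ?case
    using JMul by simp
qed simp_all

locale assoc_dialg =
  fixes smul :: "'k::field \<Rightarrow> 'd::ab_group_add \<Rightarrow> 'd" and dl dr :: "'d \<Rightarrow> 'd \<Rightarrow> 'd"
  assumes assoc_dialgebra: "assoc_dialgebra smul dl dr"
begin

sublocale vs: vector_space smul
  using assoc_dialgebra by (simp add: assoc_dialgebra_def)

lemma dl_bilinear: "bilinear_op smul dl" and dr_bilinear: "bilinear_op smul dr"
  using assoc_dialgebra by (simp_all add: assoc_dialgebra_def)

lemma dl_dr_left: "dl (dr x y) z = dl (dl x y) z"
  and dr_dl_right: "dr x (dl y z) = dr x (dr y z)"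
  and dl_assoc: "dl (dl x y) z = dl x (dl y z)"
  and dr_assoc: "dr (dr x y) z = dr x (dr y z)"
  and dr_dl_assoc: "dr (dl x y) z = dl x (dr y z)"
  using assoc_dialgebra by (simp_all add: assoc_dialgebra_def)

lemma dl_add_left: "dl (a + b) c = dl a c + dl b c"
  and dl_add_right: "dl a (b + c) = dl a b + dl a c"
  and dl_scale_left: "dl (smul s a) b = smul s (dl a b)"
  and dl_scale_right: "dl a (smul s b) = smul s (dl a b)"
  using dl_bilinear by (simp_all add: bilinear_op_def)

lemma dr_add_left: "dr (a + b) c = dr a c + dr b c"
  and dr_add_right: "dr a (b + c) = dr a b + dr a c"
  and dr_scale_left: "dr (smul s a) b = smul s (dr a b)"
  and dr_scale_right: "dr a (smul s b) = smul s (dr a b)"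
  using dr_bilinear by (simp_all add: bilinear_op_def)

lemma dl_zero: "dl 0 b = 0" "dl a 0 = 0"
  using dl_scale_left[of 0 0 b] dl_scale_right[of a 0 0] by simp_all

lemma dr_zero: "dr 0 b = 0" "dr a 0 = 0"
  using dr_scale_left[of 0 0 b] dr_scale_right[of a 0 0] by simp_all

fun rchain :: "(bool \<Rightarrow> 'd) \<Rightarrow> bool list \<Rightarrow> 'd" where
  "rchain g [] = 0"
| "rchain g [c] = g c"
| "rchain g (c # c' # cs) = dr (g c) (rchain g (c' # cs))"

fun lchain :: "(bool \<Rightarrow> 'd) \<Rightarrow> bool list \<Rightarrow> 'd \<Rightarrow> 'd" where
  "lchain g [] y = y"
| "lchain g (c # cs) y = dl (g c) (lchain g cs y)"

definition mono_val :: "(bool \<Rightarrow> 'd) \<Rightarrow> bool list \<times> nat \<Rightarrow> 'd" where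
  "mono_val g m = lchain g (take (snd m) (fst m)) (rchain g (drop (snd m) (fst m)))"

lemma rchain_Cons: "w \<noteq> [] \<Longrightarrow> rchain g (c # w) = dr (g c) (rchain g w)"
  by (cases w) simp_all

lemma dl_rchain: "v \<noteq> [] \<Longrightarrow> dl (rchain g v) y = lchain g v y"
proof (induction v)
  case (Cons c v)
  then show ?case
    by (cases "v = []") (simp_all add: rchain_Cons dl_dr_left dl_assoc)
qed simp

lemma dl_lchain: "dl (lchain g u z) y = lchain g u (dl z y)"
  by (induction u) (simp_all add: dl_assoc)

lemma lchain_append: "lchain g (u @ v) y = lchain g u (lchain g v y)"
  by (induction u) simp_all

lemma dr_lchain_left: "dr (lchain g u z) y = lchain g u (dr z y)"
  by (induction u) (simp_all add: dr_dl_assoc)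

lemma dr_rchain_rchain: "s \<noteq> [] \<Longrightarrow> v \<noteq> [] \<Longrightarrow> dr (rchain g s) (rchain g v) = rchain g (s @ v)"
proof (induction s)
  case (Cons c s)
  then show ?case
    by (cases "s = []") (simp_all add: rchain_Cons dr_assoc)
qed simp

lemma dr_lchain_right: "w \<noteq> [] \<Longrightarrow> dr x (lchain g u (rchain g w)) = dr x (rchain g (u @ w))"
proof (induction u arbitrary: x)
  case (Cons c u)
  have "dr x (lchain g (c # u) (rchain g w)) = dr (dr x (g c)) (lchain g u (rchain g w))"
    by (simp add: dr_dl_right dr_assoc)
  also have "\<dots> = dr (dr x (g c)) (rchain g (u @ w))"
    using Cons by simp
  also have "\<dots> = dr x (rchain g ((c # u) @ w))"
    using Cons.prems by (simp add: dr_assoc rchain_Cons)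
  finally show ?case .
qed simp

lemma dl_mono_val:
  assumes "i < length u" "j < length v"
  shows "dl (mono_val g (u, i)) (mono_val g (v, j)) = mono_val g (u @ v, length u + j)"
proof -
  have "drop i u \<noteq> []"
    using assms by simp
  then have "dl (mono_val g (u, i)) y = lchain g u y" for y
    by (simp add: mono_val_def dl_lchain dl_rchain lchain_append[symmetric])
  then show ?thesis
    using assms by (simp add: mono_val_def lchain_append[symmetric])
qed

lemma dr_mono_val:
  assumes "i < length u" "j < length v"
  shows "dr (mono_val g (u, i)) (mono_val g (v, j)) = mono_val g (u @ v, i)"
proof -
  have ne: "drop i u \<noteq> []" "drop j v \<noteq> []"
    using assms by simp_all
  have "dr (mono_val g (u, i)) (mono_val g (v, j)) = lchain g (take i u) (dr (rchain g (drop i u)) (rchain g v))"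
    using ne by (simp add: mono_val_def dr_lchain_left dr_lchain_right)
  also have "\<dots> = lchain g (take i u) (rchain g (drop i u @ v))"
    using ne assms by (subst dr_rchain_rchain) auto
  finally show ?thesis
    using assms by (simp add: mono_val_def)
qed

definition zval :: "(bool \<Rightarrow> 'd) \<Rightarrow> zcomb \<Rightarrow> 'd" where
  "zval g L = sum_list (map (\<lambda>(m, c). smul (of_int c) (mono_val g m)) L)"

lemma zval_Nil: "zval g [] = 0"
  and zval_append: "zval g (A @ B) = zval g A + zval g B"
  and zval_Cons: "zval g (((u, i), c) # L) = smul (of_int c) (mono_val g (u, i)) + zval g L"
  by (simp_all add: zval_def)

lemma zval_zneg: "zval g (zneg L) = - zval g L"
  by (induction L) (auto simp: zval_def zneg_def)

lemma zval_zvdash_single: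
  "zvalid [((u, i), c)] \<Longrightarrow> zvalid B \<Longrightarrow>
    zval g (zvdash [((u, i), c)] B) = dl (smul (of_int c) (mono_val g (u, i))) (zval g B)"
proof (induction B)
  case (Cons y B)
  obtain v j d where "y = ((v, j), d)"
    by (metis prod.collapse)
  with Cons show ?case
    by (simp add: zval_Cons dl_add_right dl_scale_left dl_scale_right dl_mono_val mult.commute)
qed (simp add: zval_Nil dl_zero)

lemma zval_zvdash: "zvalid A \<Longrightarrow> zvalid B \<Longrightarrow> zval g (zvdash A B) = dl (zval g A) (zval g B)"
proof (induction A)
  case (Cons x A)
  obtain u i c where "x = ((u, i), c)"
    by (metis prod.collapse)
  with Cons show ?case
    by (simp add: zvdash_Cons_left[where A = A] zval_append zval_Cons dl_add_left zval_zvdash_single)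
qed (simp add: zval_Nil dl_zero)

lemma zval_zdashv_single:
  "zvalid [((u, i), c)] \<Longrightarrow> zvalid B \<Longrightarrow>
    zval g (zdashv [((u, i), c)] B) = dr (smul (of_int c) (mono_val g (u, i))) (zval g B)"
proof (induction B)
  case (Cons y B)
  obtain v j d where "y = ((v, j), d)"
    by (metis prod.collapse)
  with Cons show ?case
    by (simp add: zval_Cons dr_add_right dr_scale_left dr_scale_right dr_mono_val mult.commute)
qed (simp add: zval_Nil dr_zero)

lemma zval_zdashv: "zvalid A \<Longrightarrow> zvalid B \<Longrightarrow> zval g (zdashv A B) = dr (zval g A) (zval g B)"
proof (induction A)
  case (Cons x A)
  obtain u i c where "x = ((u, i), c)"
    by (metis prod.collapse)
  with Cons show ?case
    by (simp add: zdashv_Cons_left[where A = A] zval_append zval_Cons dr_add_left zval_zdashv_single)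
qed (simp add: zval_Nil dr_zero)

lemma zval_eq_sum_zcoeff:
  "finite S \<Longrightarrow> fst ` set L \<subseteq> S \<Longrightarrow> zval g L = (\<Sum>m\<in>S. smul (of_int (zcoeff L m)) (mono_val g m))"
proof (induction L)
  case (Cons x L)
  obtain m0 c where x: "x = (m0, c)"
    by (cases x)
  have "(\<Sum>m\<in>S. smul (of_int (zcoeff (x # L) m)) (mono_val g m)) =
      (\<Sum>m\<in>S. (if m0 = m then smul (of_int c) (mono_val g m) else 0)) + (\<Sum>m\<in>S. smul (of_int (zcoeff L m)) (mono_val g m))"
    by (simp add: sum.distrib[symmetric]) (rule sum.cong, auto simp: x vs.scale_left_distrib)
  also have "(\<Sum>m\<in>S. (if m0 = m then smul (of_int c) (mono_val g m) else 0)) = smul (of_int c) (mono_val g m0)"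
    using Cons.prems x by (simp add: sum.delta)
  finally show ?case
    using Cons x by (simp add: zval_def)
qed (simp add: zval_Nil)

lemma zval_cong_zcoeff:
  assumes "\<And>m. zcoeff A m = zcoeff B m"
  shows "zval g A = zval g B"
  using zval_eq_sum_zcoeff[of "fst ` set (A @ B)" A g] zval_eq_sum_zcoeff[of "fst ` set (A @ B)" B g]
  by (simp add: assms image_Un)

lemma zval_zword:
  assumes "(2::'k) \<noteq> 0"
  shows "zval g (zword t) = smul (2 ^ (jdeg t - 1)) (jeval smul dl dr g t)"
proof (induction t)
  case (JMul a b)
  obtain a' b' where "jdeg a = Suc a'" "jdeg b = Suc b'"
    using jdeg_pos[of a] jdeg_pos[of b] by (metis Suc_le_D One_nat_def)
  then have e: "(2::'k) ^ (jdeg (JMul a b) - 1) * inverse 2 = 2 ^ (jdeg a - 1) * 2 ^ (jdeg b - 1)"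
    using assms by (simp add: power_add)
  let ?a = "jeval smul dl dr g a" and ?b = "jeval smul dl dr g b"
  have "zval g (zword (JMul a b)) = dl (zval g (zword a)) (zval g (zword b)) + dr (zval g (zword b)) (zval g (zword a))"
    by (simp add: zjmul_def zval_append zval_zvdash zval_zdashv zvalid_zword)
  also have "\<dots> = smul (2 ^ (jdeg a - 1) * 2 ^ (jdeg b - 1)) (dl ?a ?b + dr ?b ?a)"
    using JMul by (simp add: dl_scale_left dl_scale_right dr_scale_left dr_scale_right vs.scale_right_distrib mult.commute)
  also have "\<dots> = smul (2 ^ (jdeg (JMul a b) - 1)) (jeval smul dl dr g (JMul a b))"
    by (simp only: e[symmetric] jeval.simps plus_l_def vs.scale_scale)
  finally show ?case .
qed (simp_all add: zval_def mono_val_def)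

end

definition zmono :: "bool list \<Rightarrow> nat \<Rightarrow> zcomb" where
  "zmono w i = [((w, i), 1)]"

text \<open>Multiples of zk = 2 k under the associative, not the Jordan, operations that add up to
  2 zdiff: they identify wA and wB in every special image of DiSJ<x,y>/I, although wB - wA is
  not in I.\<close>
definition zk_multiples :: zcomb where
  "zk_multiples =
     zneg (zvdash zk (zmono [True, False, True] 2))
   @ zneg (zvdash (zmono [False] 0) (zvdash zk (zmono [True, True] 1)))
   @ zvdash (zmono [True] 0) (zvdash zk (zmono [False, True] 1))
   @ zdashv (zmono [True] 0) (zvdash zk (zmono [True, False] 0))
   @ zvdash (zmono [False, True] 0) (zvdash zk (zmono [True] 0))
   @ zdashv (zmono [True, False] 0) (zvdash zk (zmono [True] 0))
   @ zneg (zdashv (zmono [True, True] 0) (zvdash zk (zmono [False] 0)))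
   @ zneg (zdashv (zmono [True, False, True] 0) zk)"

lemma zcoeff_zk_multiples_on_support:
  "list_all (\<lambda>m. zcoeff zk_multiples m = zcoeff (zdiff @ zdiff) m) (map fst (zdiff @ zk_multiples))"
  by code_simp

lemma zcoeff_zk_multiples: "zcoeff zk_multiples m = zcoeff (zdiff @ zdiff) m"
proof (cases "m \<in> fst ` set (zdiff @ zk_multiples)")
  case True
  then show ?thesis
    using zcoeff_zk_multiples_on_support by (auto simp: list_all_iff)
next
  case False
  then show ?thesis
    using zcoeff_notin[of m zdiff] zcoeff_notin[of m zk_multiples] by (auto simp: image_Un)
qed

context assoc_dialg
begin

lemma zval_zk_multiples: "zval g zk = 0 \<Longrightarrow> zval g zk_multiples = 0"
  by (simp add: zk_multiples_def zmono_def zval_append zval_zneg zval_zvdash zval_zdashv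
      zvalid_zvdash zvalid_zk dl_zero dr_zero)

theorem jeval_wA_eq_wB:
  assumes two: "(2::'k) \<noteq> 0"
    and squares: "jeval smul dl dr g (JMul JX JX) = jeval smul dl dr g (JMul JY JY)"
  shows "jeval smul dl dr g wA = jeval smul dl dr g wB"
proof -
  have "zval g zk = 0"
    using squares by (simp del: zword.simps jeval.simps add: zk_def zval_append zval_zneg zval_zword[OF two])
  then have "zval g zdiff + zval g zdiff = 0"
    using zval_zk_multiples zval_cong_zcoeff[OF zcoeff_zk_multiples] by (simp add: zval_append)
  moreover have "zval g zdiff = smul 16 (jeval smul dl dr g wB) - smul 16 (jeval smul dl dr g wA)"
    by (simp del: zword.simps jeval.simps add: zdiff_def zval_append zval_zneg zval_zword[OF two] wA_def wB_def)
  ultimately have "smul 32 (jeval smul dl dr g wB - jeval smul dl dr g wA) = 0"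
    by (simp add: vs.scale_right_diff_distrib vs.scale_left_distrib[symmetric] algebra_simps)
  moreover have "(32::'k) \<noteq> 0"
    using two power_not_zero[of "2::'k" 5] by simp
  ultimately show ?thesis
    by simp
qed

end

theorem mainTheorem2:
  fixes smul :: "'k::field \<Rightarrow> 'd::ab_group_add \<Rightarrow> 'd"
    and dl dr :: "'d \<Rightarrow> 'd \<Rightarrow> 'd"
  assumes "(2::'k) \<noteq> 0"
    and "assoc_dialgebra smul dl dr"
  shows "\<not> embeds_into_plus smul dl dr"
proof
  interpret assoc_dialg smul dl dr
    by (rule assoc_dialg.intro) (fact assms(2))
  assume "embeds_into_plus smul dl dr"
  then obtain \<phi> :: "'k dias set \<Rightarrow> 'd" where inj: "inj_on \<phi> Quot"
    and hom: "\<forall>A\<in>Quot. \<forall>B\<in>Quot. \<phi> (ql A B) = plus_l smul dl dr (\<phi> A) (\<phi> B)"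
    unfolding embeds_into_plus_def by blast
  let ?g = "\<lambda>c. \<phi> (coset (dgen c))"
  have "coset (jval (JMul JX JX)) = (coset (jval (JMul JY JY)) :: 'k dias set)"
    using Iideal.gen by (simp add: coset_eq_iff kelem_eq_jval dsub_def dadd_def dscale_def del: jval.simps)
  then have "jeval smul dl dr ?g wA = jeval smul dl dr ?g wB"
    using jeval_wA_eq_wB[OF assms(1)] jeval_coset[OF hom] by metis
  then have "coset (jval wB) = (coset (jval wA) :: 'k dias set)"
    using inj jeval_coset[OF hom] by (metis coset_in_Quot jval_in_DiSJ inj_onD)
  then show False
    using jval_wB_minus_wA_notin_Iideal[OF assms(1)] by (simp add: coset_eq_iff)
qed

end
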